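(* Fix $\zeta\in\mathbb{R}$ and $\delta\in(0,1/6)$. Define \begin{align*} E(\tau,t) =&\; \frac{i \big(\operatorname{Li}_2(e^{2 \pi t})-\operatorname{Li}_2(e^{i \pi \tau +2 \pi t})\big)}{2 \pi \tau} +\frac{\ln(1-e^{2 \pi t})}{2}\\ & +\frac{i \pi \tau}{12} \bigg(\frac{e^{2 \pi t+i \pi \tau}}{e^{2 \pi t+i \pi \tau} - 1}-\frac{e^{2 \pi \zeta }}{e^{2 \pi \zeta}+1}-\frac{e^{2 \pi t}}{e^{2 \pi \zeta }+e^{2 \pi t}}+2\bigg). \end{align*} Then there is a constant $C>0$ such that $|E(b^2,t)|\leq Cb^2$ for all sufficiently small $b>0$ and all $t$ with $\operatorname{Im} t\in(-1/2+\delta,-2\delta)$.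
   Context: Principal branches are used: $\operatorname{Im}\ln z\in(-\pi,\pi]$ and $\operatorname{Li}_2(z)=-\int_0^z\frac{\ln(1-u)}{u}du$ for $z\in\mathbb{C}\setminus[1,\infty)$. *)

theory Defs
  imports "HOL-Complex_Analysis.Complex_Analysis"
begin

text \<open>Principal dilogarithm: Li2 z = - integral from 0 to z of Ln(1-u)/u du,
  taken along the straight segment from 0 to z (the intended domain is
  the complex plane minus the ray [1,\<infinity>), where this integrand is holomorphic
  away from the removable singularity at 0, so the integral is path independent).\<close>
definition Li2 :: "complex \<Rightarrow> complex" where
  "Li2 z = - contour_integral (linepath 0 z) (\<lambda>u. Ln (1 - u) / u)"

definition Efun :: "real \<Rightarrow> complex \<Rightarrow> complex \<Rightarrow> complex" where
  "Efun \<zeta> (\<tau>::complex) (t::complex) =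
     \<i> * (Li2 (exp (2 * complex_of_real pi * t)) - Li2 (exp (\<i> * complex_of_real pi * \<tau> + 2 * complex_of_real pi * t))) / (2 * complex_of_real pi * \<tau>)
     + Ln (1 - exp (2 * complex_of_real pi * t)) / 2
     + \<i> * complex_of_real pi * \<tau> / 12 *
       (exp (2 * complex_of_real pi * t + \<i> * complex_of_real pi * \<tau>) / (exp (2 * complex_of_real pi * t + \<i> * complex_of_real pi * \<tau>) - 1)
        - exp (2 * complex_of_real pi * complex_of_real \<zeta>) / (exp (2 * complex_of_real pi * complex_of_real \<zeta>) + 1)
        - exp (2 * complex_of_real pi * t) / (exp (2 * complex_of_real pi * complex_of_real \<zeta>) + exp (2 * complex_of_real pi * t))
        + 2)"

end

theory Submission
  imports Defs
begin

text \<open>Put \<open>c = 2\<pi>t\<close>, \<open>d = i\<pi>\<tau>\<close> and \<open>W(s) = exp (c + d s)\<close> for \<open>s \<in> [0,1]\<close>. The hypotheses on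
  \<open>Im t\<close> keep \<open>arg W(s)\<close> in \<open>[-\<pi> + a, -a]\<close> with \<open>a = 2\<pi>\<delta>\<close>, i.e. \<open>Im W \<le> -k |W|\<close> with
  \<open>k = sin a\<close>, and then every quotient \<open>W / v\<close> with \<open>|Im v| = |Im W|\<close> is bounded by \<open>1/k\<close>.
  This bounds the last term of \<open>E\<close> by \<open>O(\<tau>)\<close>. The first two terms equal \<open>-i X / (2\<pi>\<tau>)\<close> with
  \<open>X = Li\<^sub>2(W(1)) - Li\<^sub>2(W(0)) + d Ln(1 - W(0))\<close>; since \<open>(Li\<^sub>2 \<circ> W)' = -d Ln(1 - W)\<close> and
  \<open>Ln(1 - W)\<close> is \<open>|d|/k\<close>-Lipschitz along the path, \<open>|X| \<le> |d|\<^sup>2/k = O(\<tau>\<^sup>2)\<close>.\<close>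

lemma tendsto_Ln_one_minus_over: "((\<lambda>u. Ln (1 - u) / u) \<longlongrightarrow> -1) (at 0)"
proof -
  have "((\<lambda>u. Ln (1 - u)) has_field_derivative -1) (at 0)"
    by (auto intro!: derivative_eq_intros)
  then show ?thesis by (simp add: DERIV_def)
qed

lemma closed_segment_0_subset_slit_plane:
  fixes z :: complex
  assumes "1 - z \<notin> \<real>\<^sub>\<le>\<^sub>0"
  shows "closed_segment 0 z \<subseteq> {u. 1 - u \<notin> \<real>\<^sub>\<le>\<^sub>0}"
proof
  fix y assume "y \<in> closed_segment 0 z"
  then obtain t where t: "0 \<le> t" "t \<le> 1" and y: "y = of_real t * z"
    by (auto simp: in_segment scaleR_conv_of_real)
  have "1 - y \<notin> \<real>\<^sub>\<le>\<^sub>0"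
  proof
    assume "1 - y \<in> \<real>\<^sub>\<le>\<^sub>0"
    then have Im: "t * Im z = 0" and Re: "1 \<le> t * Re z"
      by (simp_all add: y complex_nonpos_Reals_iff)
    then have "0 < t * Re z" by linarith
    then have "0 < t" "0 < Re z" using t by (auto simp: zero_less_mult_iff)
    then have "t * Re z \<le> Re z" using t by (intro mult_left_le_one_le) auto
    then show False using assms Im Re \<open>0 < t\<close> by (simp add: complex_nonpos_Reals_iff)
  qed
  then show "y \<in> {u. 1 - u \<notin> \<real>\<^sub>\<le>\<^sub>0}" by simp
qed

lemma Li2_has_field_derivative:
  assumes z: "1 - z \<notin> \<real>\<^sub>\<le>\<^sub>0" "z \<noteq> 0"
  shows "(Li2 has_field_derivative - Ln (1 - z) / z) (at z)"
proof -
  define S where "S = {u::complex. 1 - u \<notin> \<real>\<^sub>\<le>\<^sub>0}"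
  define f where "f u = Ln (1 - u) / u" for u :: complex
  \<comment> \<open>\<open>f 0 = 0\<close> by the convention \<open>x / 0 = 0\<close>; \<open>g\<close> fills the removable singularity\<close>
  define g where "g u = (if u = 0 then -1 else f u)" for u
  have "S = - ((\<lambda>u. 1 - u) -` \<real>\<^sub>\<le>\<^sub>0)" by (auto simp: S_def)
  then have "open S" by (auto intro!: closed_vimage continuous_intros)
  have "starlike S"
    unfolding starlike_def S_def
    by (intro bexI[of _ 0] ballI closed_segment_0_subset_slit_plane) (auto simp: complex_nonpos_Reals_iff)
  have "g holomorphic_on S - {0}"
  proof (rule holomorphic_transform)
    show "f holomorphic_on S - {0}"
      unfolding f_def S_def by (intro holomorphic_intros) auto
  qed (simp add: g_def)
  then have g_deriv: "g field_differentiable at u" if "u \<in> S - {0}" for u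
    using \<open>open S\<close> that by (intro holomorphic_on_imp_differentiable_at[of g "S - {0}"]) auto
  have "continuous_on S g"
  proof (rule continuous_at_imp_continuous_on, intro ballI)
    fix u assume "u \<in> S"
    show "isCont g u"
    proof (cases "u = 0")
      case True
      have "(f \<longlongrightarrow> g 0) (at 0)"
        using tendsto_Ln_one_minus_over by (simp add: f_def[abs_def] g_def)
      then have "(g \<longlongrightarrow> g 0) (at 0)"
        by (rule Lim_transform_within[where d = 1]) (auto simp: g_def)
      then show ?thesis using True by (simp add: isCont_def)
    qed (use \<open>u \<in> S\<close> g_deriv field_differentiable_imp_continuous_at in blast)
  qed
  then obtain G where G: "\<And>u. u \<in> S \<Longrightarrow> (G has_field_derivative g u) (at u)"
    using holomorphic_starlike_primitive[OF _ \<open>starlike S\<close> \<open>open S\<close>, of g "{0}"] g_deriv by blast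
  have Li2_eq: "Li2 w = G 0 - G w" if "w \<in> S" for w
  proof (cases "w = 0")
    case False
    have seg: "closed_segment 0 w \<subseteq> S"
      using that closed_segment_0_subset_slit_plane by (simp add: S_def)
    have "(g has_contour_integral (G (pathfinish (linepath 0 w)) - G (pathstart (linepath 0 w))))
        (linepath 0 w)"
      by (rule contour_integral_primitive[OF has_field_derivative_at_within[OF G] valid_path_linepath])
         (use seg in simp_all)
    moreover have "contour_integral (linepath 0 w) f = contour_integral (linepath 0 w) g"
      using False by (intro contour_integral_spike_finite_simple_path[of "{0}"]) (auto simp: g_def)
    ultimately show ?thesis
      unfolding Li2_def f_def[abs_def] by (simp add: contour_integral_unique)
  qed (simp add: Li2_def)
  have "z \<in> S" using z by (simp add: S_def)
  have "((\<lambda>w. G 0 - G w) has_field_derivative - g z) (at z)"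
    using DERIV_diff[OF DERIV_const[of "G 0"] G[OF \<open>z \<in> S\<close>]] by simp
  then have "(Li2 has_field_derivative - g z) (at z)"
  proof (rule has_field_derivative_transform_within_open[OF _ \<open>open S\<close> \<open>z \<in> S\<close>])
    show "G 0 - G w = Li2 w" if "w \<in> S" for w
      using Li2_eq[OF that] by simp
  qed
  then show ?thesis using z(2) by (simp add: g_def f_def)
qed

lemma sin_le_neg_sin:
  fixes a \<theta> :: real
  assumes "0 < a" "a \<le> pi/2" "-pi + a \<le> \<theta>" "\<theta> \<le> -a"
  shows "sin \<theta> \<le> - sin a"
proof (cases "-\<theta> \<le> pi/2")
  case True
  have "sin a \<le> sin (-\<theta>)" using assms True by (intro sin_monotone_2pi_le) auto
  then show ?thesis by simp
next
  case False
  have "sin a \<le> sin (pi + \<theta>)" using assms False by (intro sin_monotone_2pi_le) auto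
  then show ?thesis by (simp add: sin_add)
qed

lemma Im_exp_le_neg_sin_norm:
  assumes "0 < a" "a \<le> pi/2" "-pi + a \<le> Im z" "Im z \<le> -a"
  shows "Im (exp z) \<le> - sin a * cmod (exp z)"
proof -
  have "Im (exp z) = exp (Re z) * sin (Im z)" by (simp add: Im_exp)
  also have "\<dots> \<le> exp (Re z) * (- sin a)"
    using sin_le_neg_sin[OF assms] by (intro mult_left_mono) auto
  finally show ?thesis by (simp add: norm_exp_eq_Re mult.commute)
qed

lemma Im_neg_of_sector:
  fixes w :: complex
  assumes "0 < k" "Im w \<le> - k * cmod w" "w \<noteq> 0"
  shows "Im w < 0"
proof -
  have "0 < k * cmod w" using assms by simp
  then show ?thesis using assms(2) by linarith
qed

lemma norm_divide_le_of_sector: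
  fixes w v :: complex
  assumes k: "0 < k" and w: "Im w \<le> - k * cmod w" and v: "\<bar>Im v\<bar> = \<bar>Im w\<bar>"
  shows "cmod (w / v) \<le> 1 / k"
proof -
  have "0 \<le> k * cmod w" using k by simp
  then have "k * cmod w \<le> \<bar>Im v\<bar>" using w v by linarith
  also have "\<dots> \<le> cmod v" by (rule abs_Im_le_cmod)
  finally show ?thesis
    using k by (cases "v = 0") (simp_all add: norm_divide field_simps)
qed

lemma norm_Ln_one_minus_exp_diff_le:
  fixes c d :: complex
  assumes k: "0 < k"
    and sector: "\<And>s. s \<in> closed_segment 0 1 \<Longrightarrow> Im (exp (c + d * s)) \<le> - k * cmod (exp (c + d * s))"
    and s: "s \<in> closed_segment 0 1"
  shows "cmod (Ln (1 - exp (c + d * s)) - Ln (1 - exp c)) \<le> cmod d / k"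
proof -
  define L where "L s = Ln (1 - exp (c + d * s))" for s
  have L_deriv: "(L has_field_derivative - (exp (c + d * s) * d / (1 - exp (c + d * s)))) (at s)"
    if "s \<in> closed_segment 0 1" for s
  proof -
    have "Im (exp (c + d * s)) < 0" using Im_neg_of_sector[OF k sector[OF that]] by simp
    then have "1 - exp (c + d * s) \<notin> \<real>\<^sub>\<le>\<^sub>0" by (auto simp: complex_nonpos_Reals_iff)
    then show ?thesis unfolding L_def by (auto intro!: derivative_eq_intros simp: divide_inverse)
  qed
  have L_deriv_bound: "cmod (- (exp (c + d * s) * d / (1 - exp (c + d * s)))) \<le> cmod d / k"
    if "s \<in> closed_segment 0 1" for s
  proof -
    have "cmod (exp (c + d * s) / (1 - exp (c + d * s))) \<le> 1 / k"
      by (rule norm_divide_le_of_sector[OF k sector[OF that]]) simp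
    then have "cmod (exp (c + d * s) / (1 - exp (c + d * s))) * cmod d \<le> 1 / k * cmod d"
      by (rule mult_right_mono) simp
    then show ?thesis by (simp add: norm_divide norm_mult)
  qed
  have "cmod (L s - L 0) \<le> cmod d / k * cmod (s - 0)"
    by (rule field_differentiable_bound[OF convex_closed_segment _ L_deriv_bound s])
       (auto intro: has_field_derivative_at_within L_deriv)
  also have "\<dots> \<le> cmod d / k"
    using s k segment_bound(1)[OF s] by (intro mult_left_le) auto
  finally show ?thesis by (simp add: L_def)
qed

lemma Li2_exp_increment_bound:
  fixes c d :: complex
  assumes k: "0 < k"
    and sector: "\<And>s. s \<in> closed_segment 0 1 \<Longrightarrow> Im (exp (c + d * s)) \<le> - k * cmod (exp (c + d * s))"
  shows "cmod (Li2 (exp (c + d)) - Li2 (exp c) + d * Ln (1 - exp c)) \<le> cmod d ^ 2 / k"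
proof -
  define \<phi> where "\<phi> s = Li2 (exp (c + d * s)) + s * (d * Ln (1 - exp c))" for s
  have \<phi>_deriv: "(\<phi> has_field_derivative d * (Ln (1 - exp c) - Ln (1 - exp (c + d * s)))) (at s)"
    if s: "s \<in> closed_segment 0 1" for s
  proof -
    have "Im (exp (c + d * s)) < 0" by (rule Im_neg_of_sector[OF k sector[OF s]]) simp
    then have Li2_deriv: "(Li2 has_field_derivative - Ln (1 - exp (c + d * s)) / exp (c + d * s))
        (at (exp (c + d * s)))"
      by (intro Li2_has_field_derivative) (auto simp: complex_nonpos_Reals_iff)
    have "((\<lambda>s. exp (c + d * s)) has_field_derivative exp (c + d * s) * d) (at s)"
      by (auto intro!: derivative_eq_intros)
    from DERIV_add[OF DERIV_chain2[OF Li2_deriv this] DERIV_cmult_right[OF DERIV_ident]]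
    show ?thesis
      unfolding \<phi>_def by (rule DERIV_cong) (simp add: field_simps)
  qed
  have \<phi>_deriv_bound: "cmod (d * (Ln (1 - exp c) - Ln (1 - exp (c + d * s)))) \<le> cmod d * (cmod d / k)"
    if "s \<in> closed_segment 0 1" for s
    unfolding norm_mult using norm_Ln_one_minus_exp_diff_le[OF k sector that]
    by (intro mult_left_mono) (simp_all add: norm_minus_commute)
  have "cmod (\<phi> 1 - \<phi> 0) \<le> cmod d * (cmod d / k) * cmod (1 - 0 :: complex)"
    by (rule field_differentiable_bound[OF convex_closed_segment _ \<phi>_deriv_bound])
       (auto intro: has_field_derivative_at_within \<phi>_deriv)
  then show ?thesis by (simp add: \<phi>_def power2_eq_square algebra_simps)
qed

lemma norm_correction_term_le:
  fixes w0 w1 :: complex and r :: real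
  assumes k: "0 < k" and w0: "Im w0 \<le> - k * cmod w0" and w1: "Im w1 \<le> - k * cmod w1"
    and r: "0 \<le> r"
  shows "cmod (w1 / (w1 - 1) - of_real r / (of_real r + 1) - w0 / (of_real r + w0) + 2) \<le> 2 / k + 3"
proof -
  have "cmod (w1 / (w1 - 1)) \<le> 1 / k"
    by (rule norm_divide_le_of_sector[OF k w1]) simp
  moreover have "cmod (of_real r / (of_real r + 1) :: complex) \<le> 1"
    using r by (simp add: norm_divide)
  moreover have "cmod (w0 / (of_real r + w0)) \<le> 1 / k"
    by (rule norm_divide_le_of_sector[OF k w0]) simp
  ultimately have "cmod (w1 / (w1 - 1)) + cmod (of_real r / (of_real r + 1) :: complex)
      + cmod (w0 / (of_real r + w0)) + cmod (2 :: complex) \<le> 2 / k + 3"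
    by simp
  moreover have "cmod (w1 / (w1 - 1) - of_real r / (of_real r + 1) - w0 / (of_real r + w0) + 2)
      \<le> cmod (w1 / (w1 - 1)) + cmod (of_real r / (of_real r + 1) :: complex)
        + cmod (w0 / (of_real r + w0)) + cmod (2 :: complex)"
    by (intro order_trans[OF norm_triangle_ineq] add_mono order_trans[OF norm_triangle_ineq4]
        norm_triangle_ineq4 order_refl)
  ultimately show ?thesis by linarith
qed

lemma norm_dilog_quotient_le:
  fixes c :: complex and k \<tau> :: real
  assumes k: "0 < k" and \<tau>: "0 < \<tau>"
    and sector: "\<And>s. s \<in> closed_segment 0 1 \<Longrightarrow>
      Im (exp (c + \<i> * pi * \<tau> * s)) \<le> - k * cmod (exp (c + \<i> * pi * \<tau> * s))"
  shows "cmod (\<i> * (Li2 (exp c) - Li2 (exp (\<i> * pi * \<tau> + c))) / (2 * pi * \<tau>) + Ln (1 - exp c) / 2)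
    \<le> pi * \<tau> / (2 * k)"
proof -
  define d :: complex where "d = \<i> * pi * \<tau>"
  define X where "X = Li2 (exp (c + d)) - Li2 (exp c) + d * Ln (1 - exp c)"
  have "cmod X \<le> cmod d ^ 2 / k"
    unfolding X_def by (rule Li2_exp_increment_bound[OF k]) (use sector in \<open>simp add: d_def\<close>)
  moreover have "cmod d = pi * \<tau>" using \<tau> by (simp add: d_def norm_mult)
  ultimately have X_bound: "cmod X \<le> (pi * \<tau>) ^ 2 / k" by simp
  \<comment> \<open>the \<open>d * Ln (1 - exp c)\<close> part of \<open>X\<close> cancels the term \<open>Ln (1 - exp c) / 2\<close>\<close>
  have "\<i> * (Li2 (exp c) - Li2 (exp (\<i> * pi * \<tau> + c))) / (2 * pi * \<tau>) + Ln (1 - exp c) / 2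
      = - \<i> * X / (2 * pi * \<tau>)"
    using \<tau> by (simp add: X_def d_def add.commute field_simps)
  also have "cmod \<dots> = cmod X / (2 * pi * \<tau>)"
    using \<tau> by (simp add: norm_divide norm_mult)
  also have "\<dots> \<le> (pi * \<tau>) ^ 2 / k / (2 * pi * \<tau>)"
    using X_bound \<tau> by (intro divide_right_mono) auto
  also have "\<dots> = pi * \<tau> / (2 * k)"
    using \<tau> k by (simp add: power2_eq_square field_simps)
  finally show ?thesis .
qed

lemma norm_Efun_le:
  fixes t :: complex and a \<tau> \<zeta> :: real
  assumes a: "0 < a" "a \<le> pi/2" and \<tau>: "0 < \<tau>"
    and angle: "\<And>u. 0 \<le> u \<Longrightarrow> u \<le> 1 \<Longrightarrow>
      -pi + a \<le> 2 * pi * Im t + pi * \<tau> * u \<and> 2 * pi * Im t + pi * \<tau> * u \<le> -a"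
  shows "cmod (Efun \<zeta> (of_real \<tau>) t) \<le> (pi / (2 * sin a) + pi / 12 * (2 / sin a + 3)) * \<tau>"
proof -
  define k where "k = sin a"
  have k: "0 < k" unfolding k_def using a by (intro sin_gt_zero) auto
  define c :: complex where "c = 2 * pi * t"
  have sector: "Im (exp (c + \<i> * pi * \<tau> * s)) \<le> - k * cmod (exp (c + \<i> * pi * \<tau> * s))"
    if s: "s \<in> closed_segment 0 1" for s
  proof -
    obtain u where "0 \<le> u" "u \<le> 1" "s = of_real u"
      using s unfolding in_segment by (auto simp: scaleR_conv_of_real)
    then show ?thesis
      unfolding k_def using angle by (intro Im_exp_le_neg_sin_norm[OF a]) (auto simp: c_def)
  qed
  have "cmod (\<i> * pi * \<tau> / 12 * (exp (c + \<i> * pi * \<tau>) / (exp (c + \<i> * pi * \<tau>) - 1)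
      - of_real (exp (2 * pi * \<zeta>)) / (of_real (exp (2 * pi * \<zeta>)) + 1)
      - exp c / (of_real (exp (2 * pi * \<zeta>)) + exp c) + 2)) \<le> pi * \<tau> / 12 * (2 / k + 3)"
    using \<tau> norm_correction_term_le[OF k sector[of 0] sector[of 1]]
    by (simp add: norm_mult mult_left_mono)
  moreover have "Efun \<zeta> (of_real \<tau>) t
    = (\<i> * (Li2 (exp c) - Li2 (exp (\<i> * pi * \<tau> + c))) / (2 * pi * \<tau>) + Ln (1 - exp c) / 2)
      + \<i> * pi * \<tau> / 12 * (exp (c + \<i> * pi * \<tau>) / (exp (c + \<i> * pi * \<tau>) - 1)
      - of_real (exp (2 * pi * \<zeta>)) / (of_real (exp (2 * pi * \<zeta>)) + 1)
      - exp c / (of_real (exp (2 * pi * \<zeta>)) + exp c) + 2)"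
    unfolding Efun_def c_def exp_of_real[symmetric] by simp
  ultimately have "cmod (Efun \<zeta> (of_real \<tau>) t) \<le> pi * \<tau> / (2 * k) + pi * \<tau> / 12 * (2 / k + 3)"
    using norm_dilog_quotient_le[OF k \<tau> sector] norm_triangle_le by (metis add_mono)
  then show ?thesis by (simp add: k_def algebra_simps)
qed

lemma strip_angle_bounds:
  fixes t :: complex and \<delta> \<tau> u :: real
  assumes "0 \<le> \<tau>" "\<tau> \<le> \<delta>" "0 \<le> u" "u \<le> 1" "-1/2 + \<delta> < Im t" "Im t < -2 * \<delta>"
  shows "-pi + 2 * pi * \<delta> \<le> 2 * pi * Im t + pi * \<tau> * u \<and> 2 * pi * Im t + pi * \<tau> * u \<le> - (2 * pi * \<delta>)"
proof -
  have "0 \<le> \<tau> * u" "\<tau> * u \<le> \<tau>" using assms by (auto intro: mult_left_le)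
  then have "-1 + 2 * \<delta> \<le> 2 * Im t + \<tau> * u" "2 * Im t + \<tau> * u \<le> -2 * \<delta>"
    using assms by linarith+
  then have "pi * (-1 + 2 * \<delta>) \<le> pi * (2 * Im t + \<tau> * u)" "pi * (2 * Im t + \<tau> * u) \<le> pi * (-2 * \<delta>)"
    by (intro mult_left_mono; simp)+
  then show ?thesis by (simp add: algebra_simps)
qed

theorem lemma4p1:
  fixes \<zeta> \<delta> :: real
  assumes "0 < \<delta>" and "\<delta> < 1/6"
  shows "\<exists>C>0. \<exists>b0>0. \<forall>b::real. 0 < b \<and> b < b0 \<longrightarrow>
           (\<forall>t::complex. -1/2 + \<delta> < Im t \<and> Im t < -2 * \<delta> \<longrightarrow>
              cmod (Efun \<zeta> (complex_of_real (b^2)) t) \<le> C * b^2)"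
proof -
  define a where "a = 2 * pi * \<delta>"
  have a: "0 < a" "a \<le> pi/2" using assms pi_gt_zero by (simp_all add: a_def)
  define C where "C = pi / (2 * sin a) + pi / 12 * (2 / sin a + 3)"
  have "0 < sin a" using a by (intro sin_gt_zero) auto
  then have "0 < C" unfolding C_def by (intro add_pos_pos mult_pos_pos divide_pos_pos) auto
  moreover have "cmod (Efun \<zeta> (of_real (b^2)) t) \<le> C * b^2"
    if b: "0 < b" "b < \<delta>" and t: "-1/2 + \<delta> < Im t" "Im t < -2 * \<delta>" for b t
  proof -
    have "b * b < \<delta> * 1" using b assms by (intro mult_strict_mono) auto
    then have "b^2 \<le> \<delta>" by (simp add: power2_eq_square)
    then show ?thesis
      unfolding C_def using norm_Efun_le[OF a, of "b^2" t \<zeta>] strip_angle_bounds[of "b^2" \<delta> _ t] b t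
      by (simp add: a_def)
  qed
  ultimately show ?thesis using assms(1) by blast
qed

end
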